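(* Let $n\ge 3$ and $1\le k\le n-2$. Then $n-k-1$ is an eigenvalue of the adjacency matrix of $X[k]$ with multiplicity at least $\binom{n-2}{k}$.
   Context: $T_n=\{(1\,2),\dots,(1\,n)\}$. $X[k]$ is the Schreier coset graph $X(S_n,S'_{n-k},T_n)$, where $S'_{n-k}\le S_n$ is the subgroup fixing $n-k+1,\dots,n$ pointwise; equivalently, $X[k]$ is the multigraph whose vertices are the $k$-tuples of pairwise distinct elements of $[n]$, with, for each vertex $(i_1,\dots,i_k)$ and each $t\in T_n$, an edge joining it to $(t(i_1),\dots,t(i_k))$ (a loop if equal). Its adjacency matrix $A$ has $A_{x,y}=\#\{t\in T_n : t(x)=y\}$, where $t$ acts entrywise on tuples; in particular each loop contributes $1$ to the diagonal entry. *)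

theory Defs
  imports "Jordan_Normal_Form.Jordan_Normal_Form" "HOL-Combinatorics.Transposition"
begin

text \<open>Vertices of X[k]: k-tuples (lists of length k) of pairwise distinct elements
  of [n] = {1..n}, enumerated in a fixed order (any order gives a permutation-similar
  matrix, hence the same spectrum).\<close>
definition Xk_vertices :: "nat \<Rightarrow> nat \<Rightarrow> nat list list" where
  "Xk_vertices n k = filter distinct (List.n_lists k [1..<n+1])"

definition Xk_adj_entry :: "nat \<Rightarrow> nat list \<Rightarrow> nat list \<Rightarrow> nat" where
  "Xk_adj_entry n x y = card {i \<in> {2..n}. map (transpose 1 i) x = y}"

definition Xk_adj :: "nat \<Rightarrow> nat \<Rightarrow> real mat" where
  "Xk_adj n k = (let vs = Xk_vertices n k in
     mat (length vs) (length vs) (\<lambda>(i, j). real (Xk_adj_entry n (vs ! i) (vs ! j))))"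

end

theory Submission
  imports Defs "Jordan_Normal_Form.Jordan_Normal_Form_Uniqueness"
    "Jordan_Normal_Form.Jordan_Normal_Form_Existence"
begin

(* For every k-subset S of {3..n} put C = {2} \<union> S, a set of size k+1.
   The function alt_fun S on vertices vanishes unless the tuple x avoids 1 and lies
   inside C; then x misses exactly one element m of C, and alt_fun S x is the sign of
   the permutation of C sending the sorted list (2, s_1, ..., s_k) to (m, x_1, ..., x_k).
   Under the adjacency matrix, a tuple avoiding 1 is fixed by exactly n-1-k of the
   transpositions (1 i) and sent to a tuple containing 1 (where alt_fun S vanishes) by
   the others; for a tuple containing 1 the surviving terms come in pairs differing by a
   transposition of C, which cancel.  So every alt_fun S is an eigenvector for n-k-1, and
   alt_fun T (sorted S) = [S = T] makes these C(n-2,k) eigenvectors independent. *)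

(* The root multiplicity "order" of polynomials is meant, not the order of a group. *)
hide_const (open) Coset.order

text \<open>Geometric multiplicity is at most algebraic multiplicity.  In a Jordan normal form
  every block contributes at most one dimension to the eigenspace, but its full size to
  the root multiplicity.\<close>

lemma sum_min1_le_sum_list:
  fixes n_as :: "(nat \<times> 'a) list"
  shows "(\<Sum>n \<leftarrow> map fst [(n, e)\<leftarrow>n_as . e = ev]. min 1 n)
    \<le> sum_list (map fst (filter (\<lambda>na. snd na = ev) n_as))"
  by (induct n_as) auto

lemma card_indep_eigenvectors_le_order:
  fixes A :: "complex mat"
  assumes A: "A \<in> carrier_mat N N" and W: "finite W" "W \<subseteq> mat_kernel (char_matrix A ev)"
    and indep: "\<not> kernel.lin_dep N (char_matrix A ev) W"
  shows "card W \<le> order ev (char_poly A)"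
proof -
  from char_poly_factorized[OF A] obtain as where "char_poly A = (\<Prod>a\<leftarrow>as. [:- a, 1:])"
    by auto
  from jordan_nf_exists[OF A this] obtain n_as where jnf: "jordan_nf A n_as" ..
  have CA: "char_matrix A ev \<in> carrier_mat N N" using A by simp
  interpret K: kernel N N "char_matrix A ev" by (unfold_locales, rule CA)
  from kernel_basis_exists[OF CA] obtain B where "finite B" "K.basis B" by auto
  hence fin_dim: "K.Ker.fin_dim" unfolding K.Ker.fin_dim_def K.Ker.basis_def by auto
  have "card W \<le> K.dim" using K.Ker.li_le_dim(2)[OF fin_dim W(2) indep] .
  also have "K.dim = dim_gen_eigenspace A ev 1" unfolding dim_gen_eigenspace_def using CA by simp
  also have "\<dots> \<le> order ev (char_poly A)"
    unfolding dim_gen_eigenspace[OF jnf] jordan_nf_order[OF jnf] by (rule sum_min1_le_sum_list)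
  finally show ?thesis .
qed

lemma (in kernel) dual_family_lin_indep:
  assumes w: "\<And>i. i \<in> I \<Longrightarrow> w i \<in> mat_kernel A"
    and dual: "\<And>i. i \<in> I \<Longrightarrow> \<exists>j<nc. \<forall>l\<in>I. w l $ j = (if l = i then 1 else 0)"
  shows "inj_on w I" and "\<not> Ker.lin_dep (w ` I)"
proof -
  show inj: "inj_on w I"
  proof
    fix i l assume il: "i \<in> I" "l \<in> I" "w i = w l"
    obtain j where "\<forall>m\<in>I. w m $ j = (if m = i then 1 else 0)" using dual[OF il(1)] by blast
    thus "i = l" using il by (metis one_neq_zero)
  qed
  show "\<not> Ker.lin_dep (w ` I)"
  proof
    assume "Ker.lin_dep (w ` I)"
    then obtain a U u where finU: "finite U" and UW: "U \<subseteq> w ` I"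
        and lc: "Ker.lincomb a U = 0\<^sub>v nc" and u: "u \<in> U" and au: "a u \<noteq> 0"
      unfolding Ker.lin_dep_def by (auto simp: module_vec_simps class_ring_simps)
    obtain i where i: "i \<in> I" "u = w i" using u UW by auto
    obtain j where j: "j < nc" and dj: "\<forall>l\<in>I. w l $ j = (if l = i then 1 else 0)"
      using dual[OF i(1)] by blast
    have coord: "x $ j = (if x = u then 1 else 0)" if "x \<in> U" for x
      using that UW dj i inj by (auto simp: inj_on_eq_iff)
    have "U \<subseteq> mat_kernel A" using UW w by auto
    hence "0 = (\<Sum>x\<in>U. a x * x $ j)"
      using arg_cong[OF lc, of "\<lambda>x. x $ j"] lincomb_index[OF j] j by simp
    also have "\<dots> = (\<Sum>x\<in>U. if x = u then a x else 0)" using coord by (intro sum.cong) auto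
    also have "\<dots> = a u" using finU u by simp
    finally show False using au by simp
  qed
qed

lemma eigenvector_of_real_in_kernel:
  fixes A :: "real mat"
  assumes A: "A \<in> carrier_mat N N" and "eigenvector A v lam"
  shows "map_vec complex_of_real v
    \<in> mat_kernel (char_matrix (map_mat complex_of_real A) (complex_of_real lam))"
proof -
  let ?Ac = "map_mat complex_of_real A"
  have Ac: "?Ac \<in> carrier_mat N N" using A by simp
  have "eigenvector ?Ac (map_vec complex_of_real v) (complex_of_real lam)"
    by (rule of_real_hom.eigenvector_hom[OF A assms(2)])
  thus ?thesis using Ac unfolding eigenvector_char_matrix[OF Ac]
    by (intro mat_kernelI[of _ N N]) auto
qed

lemma order_map_poly_of_real:
  "order (complex_of_real x) (map_poly complex_of_real p) = order x p"
proof -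
  interpret map_poly_inj_idom_divide_hom complex_of_real ..
  show ?thesis by (rule order_hom)
qed

lemma card_dual_eigenvectors_le_order:
  fixes A :: "real mat" and v :: "'i \<Rightarrow> real vec"
  assumes A: "A \<in> carrier_mat N N" and I: "finite I"
    and v: "\<And>i. i \<in> I \<Longrightarrow> v i \<in> carrier_vec N"
    and eigen: "\<And>i. i \<in> I \<Longrightarrow> A *\<^sub>v v i = lam \<cdot>\<^sub>v v i"
    and dual: "\<And>i. i \<in> I \<Longrightarrow> \<exists>j<N. \<forall>l\<in>I. v l $ j = (if l = i then 1 else 0)"
  shows "card I \<le> order lam (char_poly A)"
proof -
  let ?Ac = "map_mat complex_of_real A" and ?ev = "complex_of_real lam"
  let ?w = "\<lambda>i. map_vec complex_of_real (v i)"
  have Ac: "?Ac \<in> carrier_mat N N" using A by simp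
  interpret K: kernel N N "char_matrix ?Ac ?ev" by unfold_locales (use Ac in simp)
  have w_dual: "\<exists>j<N. \<forall>l\<in>I. ?w l $ j = (if l = i then 1 else 0)" if i: "i \<in> I" for i
  proof -
    obtain j where j: "j < N" "\<forall>l\<in>I. v l $ j = (if l = i then 1 else 0)"
      using dual[OF i] by blast
    have "?w l $ j = complex_of_real (v l $ j)" if "l \<in> I" for l using v[OF that] j(1) by simp
    thus ?thesis using j by (intro exI[of _ j]) auto
  qed
  have kernel: "?w i \<in> mat_kernel (char_matrix ?Ac ?ev)" if i: "i \<in> I" for i
  proof (rule eigenvector_of_real_in_kernel[OF A])
    obtain j where "j < N" "v i $ j = 1" using dual[OF i] i by force
    thus "eigenvector A (v i) lam" unfolding eigenvector_def using A v[OF i] eigen[OF i] by auto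
  qed
  have "card I = card (?w ` I)" using card_image[OF K.dual_family_lin_indep(1)[OF kernel w_dual]] by simp
  also have "\<dots> \<le> order ?ev (char_poly ?Ac)"
    using kernel I by (intro card_indep_eigenvectors_le_order[OF Ac]
        K.dual_family_lin_indep(2)[OF kernel w_dual]) auto
  also have "\<dots> = order lam (char_poly A)"
    unfolding of_real_hom.char_poly_hom[OF A] by (rule order_map_poly_of_real)
  finally show ?thesis .
qed

definition list_perm :: "'a list \<Rightarrow> 'a list \<Rightarrow> 'a \<Rightarrow> 'a" where
  "list_perm r y z = (case map_of (zip r y) z of None \<Rightarrow> z | Some w \<Rightarrow> w)"

lemma list_perm_nth:
  "length r = length y \<Longrightarrow> distinct r \<Longrightarrow> i < length r \<Longrightarrow> list_perm r y (r ! i) = y ! i"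
  unfolding list_perm_def by (simp add: map_of_zip_nth)

lemma list_perm_outside:
  assumes "length r = length y" "z \<notin> set r"
  shows "list_perm r y z = z"
proof -
  have "map_of (zip r y) z = None" using assms by simp
  thus ?thesis unfolding list_perm_def by simp
qed

lemma list_perm_self: "distinct r \<Longrightarrow> list_perm r r = id"
  by (rule ext) (metis id_apply in_set_conv_nth list_perm_nth list_perm_outside)

lemma list_perm_permutes:
  assumes l: "length r = length y" and dr: "distinct r" and s: "set y = set r"
  shows "list_perm r y permutes set r"
proof (rule bij_imp_permutes)
  have "set r = (!) r ` {..<length r}" by (auto simp: in_set_conv_nth)
  hence "list_perm r y ` set r = (!) y ` {..<length r}"
    by (simp add: image_image list_perm_nth[OF l dr])
  also have "\<dots> = set y" using l by (auto simp: in_set_conv_nth)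
  finally have img: "list_perm r y ` set r = set r" using s by simp
  hence "inj_on (list_perm r y) (set r)" by (intro eq_card_imp_inj_on) auto
  with img show "bij_betw (list_perm r y) (set r) (set r)" unfolding bij_betw_def by auto
qed (rule list_perm_outside[OF l])

lemma list_perm_map_transpose:
  assumes l: "length r = length y" and dr: "distinct r" and u: "u \<in> set r" and w: "w \<in> set r"
  shows "list_perm r (map (transpose u w) y) = transpose u w \<circ> list_perm r y"
proof
  fix z show "list_perm r (map (transpose u w) y) z = (transpose u w \<circ> list_perm r y) z"
  proof (cases "z \<in> set r")
    case True
    then obtain i where "i < length r" "z = r ! i" by (auto simp: in_set_conv_nth)
    thus ?thesis using list_perm_nth[OF _ dr] l by simp
  next
    case False
    hence "z \<noteq> u" "z \<noteq> w" using u w by auto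
    thus ?thesis using False l by (simp add: list_perm_outside transpose_def)
  qed
qed

lemma sign_list_perm_transpose:
  assumes l: "length r = length y" and dr: "distinct r" and s: "set y = set r"
    and u: "u \<in> set r" and w: "w \<in> set r" and uw: "u \<noteq> w"
  shows "sign (list_perm r (map (transpose u w) y)) = - sign (list_perm r y)"
proof -
  have "permutation (list_perm r y)"
    using list_perm_permutes[OF l dr s] by (rule permutes_imp_permutation[rotated]) simp
  thus ?thesis unfolding list_perm_map_transpose[OF l dr u w]
    by (simp add: sign_compose permutation_swap_id sign_swap_id uw)
qed

text \<open>The eigenvector attached to a set S (with 1, 2 \<notin> S).  Put C = insert 2 S.  A tuple
  x avoiding 1 and lying in C with length card S misses exactly one element m of C, and
  alt_fun S x is the sign of the permutation of C taking (2, sorted S) to (m # x).\<close>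

definition alt_fun :: "nat set \<Rightarrow> nat list \<Rightarrow> real" where
  "alt_fun S x = (if 1 \<notin> set x \<and> set x \<subseteq> insert 2 S
     then of_int (sign (list_perm (2 # sorted_list_of_set S) (Min (insert 2 S - set x) # x)))
     else 0)"

lemma alt_fun_contains_one: "1 \<in> set x \<Longrightarrow> alt_fun S x = 0"
  unfolding alt_fun_def by simp

lemma alt_fun_sorted_list:
  assumes S: "finite S" "1 \<notin> S" "2 \<notin> S" and T: "finite T" "2 \<notin> T" "card T = card S"
  shows "alt_fun S (sorted_list_of_set T) = (if T = S then 1 else 0)"
proof (cases "T = S")
  case True
  have "insert 2 S - S = {2}" using S by auto
  moreover have "distinct (2 # sorted_list_of_set S)" using S by simp
  ultimately show ?thesis unfolding alt_fun_def using True S by (simp add: list_perm_self subset_insertI)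
next
  case False
  have "\<not> T \<subseteq> insert 2 S"
  proof
    assume "T \<subseteq> insert 2 S"
    hence "T \<subseteq> S" using T(2) by auto
    thus False using card_subset_eq[OF S(1)] T(3) False by auto
  qed
  thus ?thesis unfolding alt_fun_def using False T by simp
qed

lemma map_transpose_absent: "a \<notin> set x \<Longrightarrow> b \<notin> set x \<Longrightarrow> map (transpose a b) x = x"
  by (rule map_idI) (auto simp: transpose_def)

lemma map_transpose_replace:
  assumes "distinct x" "p < length x" "x ! p = a" "b \<notin> set x"
  shows "map (transpose a b) x = x[p := b]"
proof (rule nth_equalityI)
  fix j assume "j < length (map (transpose a b) x)"
  hence j: "j < length x" by simp
  have "x ! j \<noteq> a" if "j \<noteq> p" using assms(1-3) j that nth_eq_iff_index_eq by metis
  moreover have "x ! j \<noteq> b" using assms(4) j by auto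
  ultimately show "map (transpose a b) x ! j = x[p := b] ! j" using assms(2,3) j
    by (cases "j = p") (auto simp: transpose_def)
qed simp

text \<open>Let x contain 1 at position
  p, and suppose the other entries of x together with two new values u, w form exactly
  C = insert 2 S.  Replacing the 1 by u or by w gives tuples whose completions to
  arrangements of C (w # x[p:=u] and u # x[p:=w]) differ by the transposition (u w), so
  their alt_fun values cancel.\<close>

lemma alt_fun_pair_cancel:
  assumes S: "finite S" "1 \<notin> S" "2 \<notin> S"
    and x: "distinct x" "p < length x" "x ! p = 1"
    and C: "insert 2 S = {u, w} \<union> (set x - {1})" and uw: "u \<noteq> w" "u \<notin> set x" "w \<notin> set x"
  shows "alt_fun S (x[p := u]) + alt_fun S (x[p := w]) = 0"
proof -
  define ref where "ref = 2 # sorted_list_of_set S"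
  have upd: "set (x[p := i]) = insert i (set x - {1})" for i
    using set_update_distinct[OF x(1,2)] x(3) by simp
  have "u \<in> insert 2 S" "w \<in> insert 2 S" unfolding C by auto
  hence u1: "u \<noteq> 1" "w \<noteq> 1" using S(2) by auto
  have val: "alt_fun S (x[p := i]) = of_int (sign (list_perm ref (j # x[p := i])))"
    if "{i, j} = {u, w}" "i \<noteq> j" for i j
  proof -
    have "insert 2 S - set (x[p := i]) = {j}" unfolding upd C using that uw by auto
    moreover have "1 \<notin> set (x[p := i])" "set (x[p := i]) \<subseteq> insert 2 S"
      unfolding upd C using that u1 by auto
    ultimately show ?thesis unfolding alt_fun_def ref_def by simp
  qed
  have swap: "u # x[p := w] = map (transpose u w) (w # x[p := u])"
  proof -
    have "map (transpose u w) (x[p := u]) = (x[p := u])[p := w]"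
      by (rule map_transpose_replace)
        (use x uw in \<open>auto simp: distinct_list_update set_update_distinct\<close>)
    thus ?thesis by simp
  qed
  have dref: "distinct ref" "set ref = insert 2 S" unfolding ref_def using S by auto
  have arr: "length ref = length (w # x[p := u])" "set (w # x[p := u]) = set ref"
  proof -
    have one: "1 \<in> set x" using x(2,3) nth_mem by force
    have "Suc (card S) = card (insert 2 S)" using S by simp
    also have "\<dots> = Suc (Suc (card (set x - {1})))" unfolding C using uw by simp
    also have "card (set x - {1}) = length x - 1" using one distinct_card[OF x(1)] by simp
    finally show "length ref = length (w # x[p := u])" unfolding ref_def using S x(2) by simp
    show "set (w # x[p := u]) = set ref" using upd[of u] C dref(2) by auto
  qed
  have "sign (list_perm ref (u # x[p := w])) = - sign (list_perm ref (w # x[p := u]))"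
    unfolding swap by (rule sign_list_perm_transpose[OF arr(1) dref(1) arr(2)]) (use dref C uw in auto)
  thus ?thesis using val[of u w] val[of w u] uw by (simp add: insert_commute)
qed

text \<open>For a tuple x containing 1 (at position p), the values of alt_fun S at the tuples
  obtained by replacing the 1 with a fresh value sum to zero: either no such tuple lies
  in C = insert 2 S, or exactly two fresh values of C remain and the terms cancel.\<close>

lemma alt_fun_sum_replace_one:
  assumes S: "S \<subseteq> {3..n}" "card S = length x"
    and x: "distinct x" "set x \<subseteq> {1..n}" "p < length x" "x ! p = 1"
  shows "(\<Sum>i\<in>{2..n} - set x. alt_fun S (x[p := i])) = 0"
proof -
  define C where "C = insert 2 S"
  define D where "D = set x - {1}"
  have finS: "finite S" and S12: "1 \<notin> S" "2 \<notin> S" using S finite_subset by auto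
  have upd: "set (x[p := i]) = insert i D" for i
    unfolding D_def using set_update_distinct[OF x(1,3)] x(4) by simp
  show ?thesis
  proof (cases "D \<subseteq> C")
    case False
    hence "alt_fun S (x[p := i]) = 0" for i unfolding alt_fun_def upd C_def by auto
    thus ?thesis by simp
  next
    case True
    have one: "1 \<in> set x" using x(3,4) nth_mem by force
    have "card (C - D) = 2"
      using card_Diff_subset[OF _ True] finS S12 S(2) one distinct_card[OF x(1)] x(3)
      unfolding C_def D_def by simp
    then obtain u w where uw: "C - D = {u, w}" "u \<noteq> w" by (auto simp: card_2_iff)
    have CD: "C - set x = C - D" unfolding D_def C_def using S12 by auto
    have "(\<Sum>i\<in>{2..n} - set x. alt_fun S (x[p := i])) = (\<Sum>i\<in>C - set x. alt_fun S (x[p := i]))"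
    proof (rule sum.mono_neutral_right)
      have "S \<noteq> {}" using S(2) x(3) by auto
      hence "2 \<le> n" using S(1) by auto
      thus "C - set x \<subseteq> {2..n} - set x" using S unfolding C_def by auto
      show "\<forall>i\<in>{2..n} - set x - (C - set x). alt_fun S (x[p := i]) = 0"
        unfolding alt_fun_def upd C_def by auto
    qed simp
    also have "\<dots> = alt_fun S (x[p := u]) + alt_fun S (x[p := w])" using uw CD by simp
    also have "\<dots> = 0"
    proof (rule alt_fun_pair_cancel[OF finS S12 x(1,3,4)])
      show "insert 2 S = {u, w} \<union> (set x - {1})" using True uw(1) unfolding C_def D_def by blast
      show "u \<notin> set x" "w \<notin> set x" using uw(1) CD by blast+
    qed (rule uw(2))
    finally show ?thesis .
  qed
qed

text \<open>If 1 \<notin> x, then (1 i) fixes x for the n-1-k values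
  i \<notin> x and moves 1 into the tuple otherwise; if 1 \<in> x both sides vanish.\<close>

lemma alt_fun_eigen_equation:
  assumes n: "2 \<le> n" and S: "S \<subseteq> {3..n}" "card S = length x"
    and x: "distinct x" "set x \<subseteq> {1..n}"
  shows "(\<Sum>i\<in>{2..n}. alt_fun S (map (transpose 1 i) x))
    = (real n - real (length x) - 1) * alt_fun S x"
proof -
  have "(\<Sum>i\<in>{2..n}. alt_fun S (map (transpose 1 i) x))
      = (\<Sum>i\<in>{2..n} - set x. alt_fun S (map (transpose 1 i) x))"
  proof (rule sum.mono_neutral_right)
    have "1 \<in> set (map (transpose 1 i) x)" if "i \<in> set x" for i using that by force
    thus "\<forall>i\<in>{2..n} - ({2..n} - set x). alt_fun S (map (transpose 1 i) x) = 0"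
      using alt_fun_contains_one by auto
  qed auto
  also have "\<dots> = (real n - real (length x) - 1) * alt_fun S x"
  proof (cases "1 \<in> set x")
    case True
    then obtain p where p: "p < length x" "x ! p = 1" by (auto simp: in_set_conv_nth)
    have "(\<Sum>i\<in>{2..n} - set x. alt_fun S (map (transpose 1 i) x))
        = (\<Sum>i\<in>{2..n} - set x. alt_fun S (x[p := i]))"
      using map_transpose_replace[OF x(1) p] by simp
    also have "\<dots> = 0" by (rule alt_fun_sum_replace_one[OF S x p])
    finally show ?thesis using alt_fun_contains_one[OF True] by simp
  next
    case False
    have "card S \<le> n - 2" using card_mono[OF _ S(1)] by simp
    have "set x \<subseteq> {2..n}"
    proof
      fix t assume "t \<in> set x"
      hence "t \<in> {1..n}" "t \<noteq> 1" using x(2) False by auto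
      thus "t \<in> {2..n}" by auto
    qed
    hence "card ({2..n} - set x) = n - 1 - length x"
      by (simp add: card_Diff_subset distinct_card[OF x(1)])
    moreover have "real (n - 1 - length x) = real n - real (length x) - 1"
      using \<open>card S \<le> n - 2\<close> S(2) n by (simp add: of_nat_diff)
    ultimately show ?thesis using map_transpose_absent[OF False] by simp
  qed
  finally show ?thesis .
qed

lemma set_Xk_vertices: "set (Xk_vertices n k) = {x. length x = k \<and> distinct x \<and> set x \<subseteq> {1..n}}"
  unfolding Xk_vertices_def by (auto simp: set_n_lists)

lemma distinct_Xk_vertices: "distinct (Xk_vertices n k)"
  unfolding Xk_vertices_def by (simp add: distinct_n_lists)

lemma Xk_vertices_transpose_closed:
  assumes "x \<in> set (Xk_vertices n k)" "i \<in> {2..n}"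
  shows "map (transpose 1 i) x \<in> set (Xk_vertices n k)"
proof -
  have "transpose 1 i a \<in> {1..n}" if "a \<in> {1..n}" for a
    using that assms(2) by (auto simp: transpose_def)
  thus ?thesis using assms(1) unfolding set_Xk_vertices by (auto simp: distinct_map)
qed

lemma sum_nth_indicator:
  assumes "distinct vs" "y \<in> set vs"
  shows "(\<Sum>j<length vs. if y = vs ! j then g (vs ! j) else 0) = (g y :: real)"
proof -
  from assms(2) obtain j0 where j0: "j0 < length vs" "vs ! j0 = y" by (auto simp: in_set_conv_nth)
  have "(\<Sum>j<length vs. if y = vs ! j then g (vs ! j) else 0) = (\<Sum>j<length vs. if j = j0 then g y else 0)"
    using j0 nth_eq_iff_index_eq[OF assms(1)] by (intro sum.cong) auto
  also have "\<dots> = g y" using j0 by simp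
  finally show ?thesis .
qed

lemma Xk_adj_mult_vec:
  assumes r: "r < length (Xk_vertices n k)"
  shows "(Xk_adj n k *\<^sub>v vec (length (Xk_vertices n k)) (\<lambda>j. g (Xk_vertices n k ! j))) $ r
    = (\<Sum>i\<in>{2..n}. g (map (transpose 1 i) (Xk_vertices n k ! r)))"
proof -
  define vs where "vs = Xk_vertices n k"
  define x where "x = vs ! r"
  have x: "x \<in> set vs" unfolding x_def using r vs_def by simp
  let ?hit = "\<lambda>i j. map (transpose 1 i) x = vs ! j"
  have "(Xk_adj n k *\<^sub>v vec (length vs) (\<lambda>j. g (vs ! j))) $ r
     = (\<Sum>j<length vs. real (card {i \<in> {2..n}. ?hit i j}) * g (vs ! j))"
    using r unfolding Xk_adj_def Let_def vs_def[symmetric] x_def Xk_adj_entry_def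
    by (simp add: scalar_prod_def lessThan_atLeast0)
  also have "\<dots> = (\<Sum>j<length vs. \<Sum>i\<in>{2..n}. if ?hit i j then g (vs ! j) else 0)"
    by (intro sum.cong) (simp_all add: sum.If_cases Int_def conj_commute)
  also have "\<dots> = (\<Sum>i\<in>{2..n}. \<Sum>j<length vs. if ?hit i j then g (vs ! j) else 0)"
    by (rule sum.swap)
  also have "\<dots> = (\<Sum>i\<in>{2..n}. g (map (transpose 1 i) x))"
    by (intro sum.cong refl sum_nth_indicator[OF distinct_Xk_vertices[of n k, folded vs_def]])
      (use Xk_vertices_transpose_closed[of x n k] x in \<open>simp add: vs_def\<close>)
  finally show ?thesis unfolding vs_def x_def .
qed

lemma Xk_adj_alt_fun_eigenvector:
  assumes n: "2 \<le> n" and S: "S \<subseteq> {3..n}" "card S = k"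
  defines "vs \<equiv> Xk_vertices n k"
  shows "Xk_adj n k *\<^sub>v vec (length vs) (\<lambda>j. alt_fun S (vs ! j))
    = (real n - real k - 1) \<cdot>\<^sub>v vec (length vs) (\<lambda>j. alt_fun S (vs ! j))"
proof (rule eq_vecI)
  fix r assume "r < dim_vec ((real n - real k - 1) \<cdot>\<^sub>v vec (length vs) (\<lambda>j. alt_fun S (vs ! j)))"
  hence r: "r < length vs" by simp
  hence "vs ! r \<in> set vs" by simp
  hence x: "length (vs ! r) = k" "distinct (vs ! r)" "set (vs ! r) \<subseteq> {1..n}"
    unfolding vs_def set_Xk_vertices by auto
  show "(Xk_adj n k *\<^sub>v vec (length vs) (\<lambda>j. alt_fun S (vs ! j))) $ r
      = ((real n - real k - 1) \<cdot>\<^sub>v vec (length vs) (\<lambda>j. alt_fun S (vs ! j))) $ r"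
    using Xk_adj_mult_vec[of r n k] alt_fun_eigen_equation[OF n S(1), of "vs ! r"] r x S(2)
    unfolding vs_def by simp
qed (simp add: Xk_adj_def vs_def Let_def)

lemma Xk_alt_fun_dual:
  assumes S: "S \<subseteq> {3..n}" "card S = k"
  shows "\<exists>j<length (Xk_vertices n k). \<forall>T. T \<subseteq> {3..n} \<and> card T = k \<longrightarrow>
    alt_fun T (Xk_vertices n k ! j) = (if T = S then 1 else 0)"
proof -
  have finS: "finite S" using S(1) finite_subset by blast
  hence "sorted_list_of_set S \<in> set (Xk_vertices n k)" using S unfolding set_Xk_vertices by auto
  then obtain j where j: "j < length (Xk_vertices n k)" "Xk_vertices n k ! j = sorted_list_of_set S"
    by (auto simp: in_set_conv_nth)
  have "\<forall>T. T \<subseteq> {3..n} \<and> card T = k \<longrightarrow>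
      alt_fun T (sorted_list_of_set S) = (if T = S then 1 else 0)"
  proof (intro allI impI)
    fix T assume T: "T \<subseteq> {3..n} \<and> card T = k"
    have "alt_fun T (sorted_list_of_set S) = (if S = T then 1 else 0)"
      by (rule alt_fun_sorted_list) (use finS S T finite_subset[of T "{3..n}"] in auto)
    thus "alt_fun T (sorted_list_of_set S) = (if T = S then 1 else 0)" by auto
  qed
  thus ?thesis using j unfolding j(2)[symmetric] by blast
qed

lemma eigenvalue_if_order_pos:
  fixes A :: "'a :: field mat"
  assumes A: "A \<in> carrier_mat N N" and "0 < order lam (char_poly A)"
  shows "eigenvalue A lam"
proof -
  have "char_poly A \<noteq> 0" using degree_monic_char_poly[OF A] by auto
  hence "poly (char_poly A) lam = 0" using assms(2) by (simp add: order_root)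
  thus ?thesis using eigenvalue_root_char_poly[OF A] by simp
qed

theorem mainTheorem10:
  fixes n k :: nat
  assumes "n \<ge> 3" and "1 \<le> k" and "k \<le> n - 2"
  shows "eigenvalue (Xk_adj n k) (real n - real k - 1)
    \<and> order (real n - real k - 1) (char_poly (Xk_adj n k)) \<ge> (n - 2) choose k"
proof -
  define vs where "vs = Xk_vertices n k"
  define I where "I = {S. S \<subseteq> {3..n} \<and> card S = k}"
  define v where "v S = vec (length vs) (\<lambda>j. alt_fun S (vs ! j))" for S
  have A: "Xk_adj n k \<in> carrier_mat (length vs) (length vs)"
    unfolding Xk_adj_def Let_def vs_def by simp
  have "card I = (n - 2) choose k" unfolding I_def by (subst n_subsets) auto
  have dual: "\<exists>j<length vs. \<forall>T\<in>I. v T $ j = (if T = S then 1 else 0)" if "S \<in> I" for S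
  proof -
    have "S \<subseteq> {3..n}" "card S = k" using that unfolding I_def by auto
    from Xk_alt_fun_dual[OF this, folded vs_def] obtain j where "j < length vs"
        "\<forall>T. T \<subseteq> {3..n} \<and> card T = k \<longrightarrow> alt_fun T (vs ! j) = (if T = S then 1 else 0)"
      by blast
    thus ?thesis unfolding v_def I_def by (intro exI[of _ j]) auto
  qed
  have "card I \<le> order (real n - real k - 1) (char_poly (Xk_adj n k))"
  proof (rule card_dual_eigenvectors_le_order[OF A _ _ _ dual])
    show "finite I" unfolding I_def by (rule finite_subset[of _ "Pow {3..n}"]) auto
    show "Xk_adj n k *\<^sub>v v S = (real n - real k - 1) \<cdot>\<^sub>v v S" if "S \<in> I" for S
      using Xk_adj_alt_fun_eigenvector[of n S k] that assms(1) unfolding v_def vs_def I_def by simp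
  qed (simp add: v_def)
  hence order: "(n - 2) choose k \<le> order (real n - real k - 1) (char_poly (Xk_adj n k))"
    using \<open>card I = (n - 2) choose k\<close> by simp
  moreover have "0 < (n - 2) choose k" using assms by simp
  ultimately have "eigenvalue (Xk_adj n k) (real n - real k - 1)"
    by (intro eigenvalue_if_order_pos[OF A]) linarith
  with order show ?thesis by simp
qed

end
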